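(* Let $G$ be a connected graph and let $S\subseteq V(G)$. The following statements are equivalent: (1) there is a GS ordering of $G$ whose $\mathcal{F}$-tree has all elements of $S$ as leaves; (2) there is a spanning tree of $G$ in which all elements of $S$ are leaves; (3) the set $V(G)\setminus S$ is a connected dominating set of $G$.
   Context: All graphs are finite, simple, undirected, connected and non-empty. A GS (generic search) ordering of $G$ is an ordering $(v_1,\dots,v_n)$ of $V(G)$ such that every $v_i$ with $i>1$ has a neighbor among $v_1,\dots,v_{i-1}$. Its $\mathcal{F}$-tree is the spanning tree rooted at $v_1$ in which the parent of $v_i$ ($i>1$) is its neighbor appearing leftmost in the ordering. Spanning trees are rooted; a leaf is a non-root vertex without children (the root is never a leaf). A connected dominating set is a set $D\subseteq V(G)$ such that $G[D]$ is connected and every vertex outside $D$ has a neighbor in $D$. *)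

theory Defs
  imports Main
begin

definition simple_graph :: "'a set \<Rightarrow> ('a \<Rightarrow> 'a \<Rightarrow> bool) \<Rightarrow> bool" where
  "simple_graph V E \<longleftrightarrow> finite V \<and> V \<noteq> {} \<and>
     (\<forall>u v. E u v \<longrightarrow> u \<in> V \<and> v \<in> V) \<and>
     (\<forall>u v. E u v \<longrightarrow> E v u) \<and> (\<forall>u. \<not> E u u)"

definition induced_connected :: "('a \<Rightarrow> 'a \<Rightarrow> bool) \<Rightarrow> 'a set \<Rightarrow> bool" where
  "induced_connected E D \<longleftrightarrow> D \<noteq> {} \<and>
     (\<forall>u\<in>D. \<forall>v\<in>D. (\<lambda>x y. E x y \<and> x \<in> D \<and> y \<in> D)\<^sup>*\<^sup>* u v)"

definition connected_graph :: "'a set \<Rightarrow> ('a \<Rightarrow> 'a \<Rightarrow> bool) \<Rightarrow> bool" where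
  "connected_graph V E \<longleftrightarrow> simple_graph V E \<and> induced_connected E V"

definition connected_dominating_set :: "'a set \<Rightarrow> ('a \<Rightarrow> 'a \<Rightarrow> bool) \<Rightarrow> 'a set \<Rightarrow> bool" where
  "connected_dominating_set V E D \<longleftrightarrow> D \<subseteq> V \<and> induced_connected E D \<and>
     (\<forall>v \<in> V - D. \<exists>u \<in> D. E v u)"

text \<open>The tree edges are {v, p v} for v in V - {r}.\<close>
definition rooted_spanning_tree ::
  "'a set \<Rightarrow> ('a \<Rightarrow> 'a \<Rightarrow> bool) \<Rightarrow> 'a \<Rightarrow> ('a \<Rightarrow> 'a) \<Rightarrow> bool" where
  "rooted_spanning_tree V E r p \<longleftrightarrow> r \<in> V \<and>
     (\<forall>v \<in> V - {r}. p v \<in> V \<and> E v (p v)) \<and>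
     (\<forall>v \<in> V. \<exists>k. (p ^^ k) v = r)"

definition tree_leaf :: "'a set \<Rightarrow> 'a \<Rightarrow> ('a \<Rightarrow> 'a) \<Rightarrow> 'a \<Rightarrow> bool" where
  "tree_leaf V r p v \<longleftrightarrow> v \<in> V \<and> v \<noteq> r \<and> \<not> (\<exists>w \<in> V - {r}. p w = v)"

definition gs_ordering :: "'a set \<Rightarrow> ('a \<Rightarrow> 'a \<Rightarrow> bool) \<Rightarrow> 'a list \<Rightarrow> bool" where
  "gs_ordering V E xs \<longleftrightarrow> distinct xs \<and> set xs = V \<and>
     (\<forall>i. 0 < i \<and> i < length xs \<longrightarrow> (\<exists>j < i. E (xs ! i) (xs ! j)))"

definition F_root :: "'a list \<Rightarrow> 'a" where
  "F_root xs = hd xs"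

definition F_parent :: "('a \<Rightarrow> 'a \<Rightarrow> bool) \<Rightarrow> 'a list \<Rightarrow> 'a \<Rightarrow> 'a" where
  "F_parent E xs v = xs ! (LEAST j. j < length xs \<and> E v (xs ! j))"

end

theory Submission
  imports Defs
begin

text \<open>
  (1) \<Longrightarrow> (2): in a GS ordering the leftmost earlier neighbour of a vertex precedes it, so
  following F-parents strictly decreases the position and ends at the first vertex.
  (2) \<Longrightarrow> (3): a parent is never a leaf, so following parents from a vertex outside S stays
  outside S up to the root, and every leaf is adjacent to its parent.
  (3) \<Longrightarrow> (1): order the connected set V - S by a search and append S; every vertex then has a
  neighbour in the first part, hence its F-parent lies there and no vertex of S is a parent.
\<close>

definition search_order :: "('a \<Rightarrow> 'a \<Rightarrow> bool) \<Rightarrow> 'a list \<Rightarrow> bool" where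
  "search_order E xs \<longleftrightarrow> (\<forall>i. 0 < i \<and> i < length xs \<longrightarrow> (\<exists>j < i. E (xs ! i) (xs ! j)))"

lemma gs_ordering_iff_search_order:
  "gs_ordering V E xs \<longleftrightarrow> distinct xs \<and> set xs = V \<and> search_order E xs"
  by (simp add: gs_ordering_def search_order_def)

lemma search_order_singleton: "search_order E [x]"
  by (auto simp: search_order_def)

lemma search_order_snoc:
  assumes "search_order E xs" "x \<in> set xs" "E y x"
  shows "search_order E (xs @ [y])"
  unfolding search_order_def
proof (intro allI impI)
  fix i assume i: "0 < i \<and> i < length (xs @ [y])"
  show "\<exists>j<i. E ((xs @ [y]) ! i) ((xs @ [y]) ! j)"
  proof (cases "i < length xs")
    case True
    then show ?thesis
      using assms(1) i by (fastforce simp: search_order_def nth_append)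
  next
    case False
    then have "i = length xs" using i by simp
    moreover obtain j where "j < length xs" "xs ! j = x"
      using assms(2) by (meson in_set_conv_nth)
    ultimately show ?thesis using assms(3) by (auto simp: nth_append)
  qed
qed

lemma search_order_append:
  assumes "search_order E xs" "\<forall>y \<in> set ys. \<exists>x \<in> set xs. E y x"
  shows "search_order E (xs @ ys)"
  using assms(2)
proof (induction ys rule: rev_induct)
  case Nil
  then show ?case using assms(1) by simp
next
  case (snoc y ys)
  then obtain x where "x \<in> set xs" "E y x" by auto
  with snoc show ?case
    using search_order_snoc[of E "xs @ ys" x y] by simp
qed

lemma search_order_neighbour_in_set:
  assumes "search_order E xs" "w \<in> set xs" "w \<noteq> hd xs"
  shows "\<exists>x \<in> set xs. E w x"
proof -
  obtain i where i: "i < length xs" "xs ! i = w"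
    using assms(2) by (meson in_set_conv_nth)
  have "i \<noteq> 0"
  proof
    assume "i = 0"
    with i assms(3) show False by (cases xs) auto
  qed
  then obtain j where "j < i" "E w (xs ! j)"
    using assms(1) i by (auto simp: search_order_def)
  then show ?thesis using i(1) by auto
qed

lemma rtranclp_enters_set:
  assumes "R\<^sup>*\<^sup>* a b" "a \<notin> A" "b \<in> A"
  shows "\<exists>x y. R x y \<and> x \<notin> A \<and> y \<in> A"
  using assms by (induction rule: rtranclp_induct) auto

lemma search_order_extend:
  assumes "finite D" "induced_connected E D"
    and "distinct xs" "set xs \<subseteq> D" "xs \<noteq> []" "search_order E xs"
  shows "\<exists>ys. distinct ys \<and> set ys = D \<and> search_order E ys"
  using assms(3-6)
proof (induction "card (D - set xs)" arbitrary: xs rule: less_induct)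
  case less
  show ?case
  proof (cases "set xs = D")
    case True
    with less.prems show ?thesis by blast
  next
    case False
    then obtain v where v: "v \<in> D" "v \<notin> set xs" using less.prems(2) by blast
    \<comment> \<open>A path from the missing vertex into the list enters it by an edge from outside,
      so the new vertex is adjacent to the list without using symmetry of E.\<close>
    have "(\<lambda>x y. E x y \<and> x \<in> D \<and> y \<in> D)\<^sup>*\<^sup>* v (hd xs)"
      using assms(2) v(1) less.prems(2) hd_in_set[OF less.prems(3)]
      by (auto simp: induced_connected_def)
    then obtain y x where yx: "E y x" "y \<in> D" "y \<notin> set xs" "x \<in> set xs"
      using rtranclp_enters_set[OF _ v(2) hd_in_set[OF less.prems(3)]] by blast
    have "card (D - set xs - {y}) < card (D - set xs)"
      using assms(1) yx(2,3) by (intro card_Diff1_less) auto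
    moreover have "D - set (xs @ [y]) = D - set xs - {y}" by auto
    ultimately have "card (D - set (xs @ [y])) < card (D - set xs)" by simp
    moreover have "distinct (xs @ [y])" "set (xs @ [y]) \<subseteq> D" "search_order E (xs @ [y])"
      using less.prems yx search_order_snoc[of E xs x y] by auto
    ultimately show ?thesis using less.hyps by blast
  qed
qed

lemma search_order_exists:
  assumes "finite D" "induced_connected E D"
  shows "\<exists>xs. distinct xs \<and> set xs = D \<and> search_order E xs"
proof -
  obtain r where "r \<in> D" using assms(2) by (auto simp: induced_connected_def)
  then show ?thesis
    using search_order_extend[OF assms, of "[r]"] by (simp add: search_order_singleton)
qed

lemma F_parent_nth_le:
  assumes "j < length xs" "E v (xs ! j)"
  shows "\<exists>l \<le> j. F_parent E xs v = xs ! l \<and> E v (xs ! l)"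
proof -
  let ?P = "\<lambda>j. j < length xs \<and> E v (xs ! j)"
  have "?P (Least ?P)" by (rule LeastI[of ?P j]) (use assms in auto)
  moreover have "Least ?P \<le> j" by (rule Least_le) (use assms in auto)
  ultimately show ?thesis unfolding F_parent_def by blast
qed

lemma F_parent_nth_less:
  assumes "search_order E xs" "0 < i" "i < length xs"
  shows "\<exists>l < i. F_parent E xs (xs ! i) = xs ! l \<and> E (xs ! i) (xs ! l)"
proof -
  obtain j where "j < i" "E (xs ! i) (xs ! j)"
    using assms by (auto simp: search_order_def)
  with F_parent_nth_le[of j xs E "xs ! i"] assms(3) show ?thesis
    by (meson le_less_trans less_trans)
qed

lemma F_parent_append_in_prefix:
  assumes "x \<in> set xs" "E v x"
  shows "F_parent E (xs @ ys) v \<in> set xs"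
proof -
  obtain j where j: "j < length xs" "xs ! j = x"
    using assms(1) by (meson in_set_conv_nth)
  then obtain l where "l \<le> j" "F_parent E (xs @ ys) v = (xs @ ys) ! l"
    using F_parent_nth_le[of j "xs @ ys" E v] assms(2) by (auto simp: nth_append)
  then show ?thesis using j(1) by (simp add: nth_append)
qed

lemma F_tree_rooted_spanning_tree:
  assumes "gs_ordering V E xs" "V \<noteq> {}"
  shows "rooted_spanning_tree V E (F_root xs) (F_parent E xs)"
proof -
  have xs: "distinct xs" "set xs = V" "search_order E xs"
    using assms(1) by (auto simp: gs_ordering_iff_search_order)
  have "xs \<noteq> []" using xs(2) assms(2) by auto
  then have root: "F_root xs = xs ! 0" "xs ! 0 \<in> V"
    using xs(2) by (auto simp: F_root_def hd_conv_nth)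
  have reaches_root: "\<exists>k. (F_parent E xs ^^ k) (xs ! i) = F_root xs" if "i < length xs" for i
    using that
  proof (induction i rule: less_induct)
    case (less i)
    show ?case
    proof (cases "i = 0")
      case True
      then show ?thesis using root by (intro exI[of _ 0]) simp
    next
      case False
      then obtain l where "l < i" "F_parent E xs (xs ! i) = xs ! l"
        using F_parent_nth_less[OF xs(3)] less.prems by blast
      moreover from this obtain k where "(F_parent E xs ^^ k) (xs ! l) = F_root xs"
        using less by auto
      ultimately show ?thesis by (intro exI[of _ "Suc k"]) (simp add: funpow_swap1)
    qed
  qed
  show ?thesis unfolding rooted_spanning_tree_def
  proof (intro conjI ballI)
    show "F_root xs \<in> V" using root by simp
  next
    fix v assume v: "v \<in> V - {F_root xs}"
    then obtain i where i: "i < length xs" "xs ! i = v"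
      using xs(2) by (metis DiffD1 in_set_conv_nth)
    have "0 < i" using i v root by (cases i) auto
    then obtain l where "l < i" "F_parent E xs v = xs ! l" "E v (xs ! l)"
      using F_parent_nth_less[OF xs(3) _ i(1)] i(2) by blast
    then show "F_parent E xs v \<in> V" "E v (F_parent E xs v)" using i(1) xs(2) by auto
  next
    fix v assume "v \<in> V"
    then show "\<exists>k. (F_parent E xs ^^ k) v = F_root xs"
      using xs(2) reaches_root by (metis in_set_conv_nth)
  qed
qed

lemma rooted_spanning_tree_reaches_root_within:
  assumes "rooted_spanning_tree V E r p" "D \<subseteq> V" "r \<in> D"
    and "\<And>v. v \<in> D - {r} \<Longrightarrow> p v \<in> D" "v \<in> D"
  shows "(\<lambda>x y. E x y \<and> x \<in> D \<and> y \<in> D)\<^sup>*\<^sup>* v r"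
proof -
  let ?R = "\<lambda>x y. E x y \<and> x \<in> D \<and> y \<in> D"
  have "v \<in> V" using assms(2,5) by blast
  then obtain k where "(p ^^ k) v = r"
    using assms(1) unfolding rooted_spanning_tree_def by blast
  then show ?thesis using assms(5)
  proof (induction k arbitrary: v)
    case 0
    then show ?case by simp
  next
    case (Suc k)
    show ?case
    proof (cases "v = r")
      case True
      then show ?thesis by simp
    next
      case False
      then have parent: "p v \<in> D" "E v (p v)"
        using assms(1,2,4) Suc.prems(2) by (auto simp: rooted_spanning_tree_def)
      have "(p ^^ k) (p v) = r" using Suc.prems(1) by (simp add: funpow_swap1)
      then have "?R\<^sup>*\<^sup>* (p v) r" using Suc.IH parent(1) by blast
      then show ?thesis
        using parent Suc.prems(2) converse_rtranclp_into_rtranclp[of ?R v "p v" r] by blast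
    qed
  qed
qed

lemma induced_connected_if_reaches:
  assumes "symp E" "r \<in> D"
    and "\<And>v. v \<in> D \<Longrightarrow> (\<lambda>x y. E x y \<and> x \<in> D \<and> y \<in> D)\<^sup>*\<^sup>* v r"
  shows "induced_connected E D"
proof -
  let ?R = "\<lambda>x y. E x y \<and> x \<in> D \<and> y \<in> D"
  have "symp ?R\<^sup>*\<^sup>*"
    using assms(1) by (intro symp_rtranclp) (auto simp: symp_def)
  then show ?thesis
    using assms(2,3) unfolding induced_connected_def
    by (meson empty_iff rtranclp_trans sympD)
qed

lemma connected_dominating_set_if_leaves:
  assumes "symp E" "rooted_spanning_tree V E r p" "\<forall>s \<in> S. tree_leaf V r p s"
  shows "connected_dominating_set V E (V - S)"
proof -
  have tree: "r \<in> V" "\<And>v. v \<in> V - {r} \<Longrightarrow> p v \<in> V \<and> E v (p v)"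
    using assms(2) by (auto simp: rooted_spanning_tree_def)
  have leaf: "\<And>s. s \<in> S \<Longrightarrow> s \<in> V - {r} \<and> \<not> (\<exists>w \<in> V - {r}. p w = s)"
    using assms(3) by (auto simp: tree_leaf_def)
  have r: "r \<in> V - S" using tree(1) leaf by blast
  have parent: "p v \<in> V - S" if "v \<in> V - {r}" for v
    using that tree(2) leaf by blast
  have "induced_connected E (V - S)"
    using induced_connected_if_reaches[OF assms(1) r]
      rooted_spanning_tree_reaches_root_within[OF assms(2) _ r] parent by blast
  moreover have "\<forall>v \<in> V - (V - S). \<exists>u \<in> V - S. E v u"
    using leaf parent tree(2) by blast
  ultimately show ?thesis by (simp add: connected_dominating_set_def)
qed

lemma gs_ordering_with_leaves_if_connected_dominating:
  assumes "finite V" "S \<subseteq> V" "connected_dominating_set V E (V - S)"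
  shows "\<exists>xs. gs_ordering V E xs \<and> (\<forall>s \<in> S. tree_leaf V (F_root xs) (F_parent E xs) s)"
proof -
  have conn: "induced_connected E (V - S)" and dom: "\<forall>s \<in> S. \<exists>x \<in> V - S. E s x"
    using assms(2,3) by (auto simp: connected_dominating_set_def)
  obtain xs where xs: "distinct xs" "set xs = V - S" "search_order E xs"
    using search_order_exists[OF _ conn] assms(1) by blast
  obtain ys where ys: "distinct ys" "set ys = S"
    using finite_distinct_list[OF finite_subset[OF assms(2,1)]] by blast
  have "xs \<noteq> []" using xs(2) conn by (auto simp: induced_connected_def)
  then have root: "F_root (xs @ ys) = hd xs" "hd xs \<in> V - S"
    using xs(2) hd_in_set[of xs] by (simp_all add: F_root_def)
  have "search_order E (xs @ ys)"
    using search_order_append[OF xs(3)] dom xs(2) ys(2) by simp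
  moreover have "distinct (xs @ ys)" "set (xs @ ys) = V" using xs ys assms(2) by auto
  ultimately have gs: "gs_ordering V E (xs @ ys)" by (simp add: gs_ordering_iff_search_order)
  have parent: "F_parent E (xs @ ys) w \<in> V - S" if "w \<in> V - {hd xs}" for w
  proof -
    have "\<exists>x \<in> set xs. E w x"
    proof (cases "w \<in> S")
      case True
      then show ?thesis using dom xs(2) by simp
    next
      case False
      then show ?thesis using that xs(2) search_order_neighbour_in_set[OF xs(3), of w] by simp
    qed
    then have "F_parent E (xs @ ys) w \<in> set xs" using F_parent_append_in_prefix by metis
    with xs(2) show ?thesis by simp
  qed
  have "tree_leaf V (F_root (xs @ ys)) (F_parent E (xs @ ys)) s" if "s \<in> S" for s
    using that parent root assms(2) by (auto simp: tree_leaf_def)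
  with gs show ?thesis by (intro exI[of _ "xs @ ys"]) simp
qed

theorem theorem3p5:
  fixes V :: "'a set" and E :: "'a \<Rightarrow> 'a \<Rightarrow> bool" and S :: "'a set"
  assumes "connected_graph V E" and "S \<subseteq> V"
  shows "((\<exists>xs. gs_ordering V E xs \<and>
             (\<forall>s \<in> S. tree_leaf V (F_root xs) (F_parent E xs) s))
          \<longleftrightarrow> (\<exists>r p. rooted_spanning_tree V E r p \<and> (\<forall>s \<in> S. tree_leaf V r p s)))
       \<and> ((\<exists>r p. rooted_spanning_tree V E r p \<and> (\<forall>s \<in> S. tree_leaf V r p s))
          \<longleftrightarrow> connected_dominating_set V E (V - S))"
proof -
  have fin: "finite V" and ne: "V \<noteq> {}" and sym: "symp E"
    using assms(1) by (auto simp: connected_graph_def simple_graph_def symp_def)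
  let ?gs = "\<exists>xs. gs_ordering V E xs \<and> (\<forall>s \<in> S. tree_leaf V (F_root xs) (F_parent E xs) s)"
  let ?tree = "\<exists>r p. rooted_spanning_tree V E r p \<and> (\<forall>s \<in> S. tree_leaf V r p s)"
  have "?gs \<Longrightarrow> ?tree" using F_tree_rooted_spanning_tree[OF _ ne] by blast
  moreover have "?tree \<Longrightarrow> connected_dominating_set V E (V - S)"
    using connected_dominating_set_if_leaves[OF sym] by blast
  moreover have "connected_dominating_set V E (V - S) \<Longrightarrow> ?gs"
    using gs_ordering_with_leaves_if_connected_dominating[OF fin assms(2)] .
  ultimately show ?thesis by blast
qed

end
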